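(* For all integers $h \ge 2$, we have $(h+1)^2 \in \mathcal{R}_{\mathbf{Z}}(h,4)$, and for all integers $i_0 \in [0,h-2]$ and $r \in [0,1]$, \[ (i_0+1)\big(2(h-i_0) - r\big) + (h-i_0)^2 \in \mathcal{R}_{\mathbf{Z}}(h,4). \]
   Context: For a positive integer $h$ and a finite set $A$ of integers, $hA$ denotes the set of all sums $a_1+\cdots+a_h$ with $a_1,\ldots,a_h \in A$ (not necessarily distinct). The sumset size set is $\mathcal{R}_{\mathbf{Z}}(h,k) = \{ |hA| : A \subseteq \mathbf{Z},\ |A| = k\}$. For real $u,v$, $[u,v] = \{n \in \mathbf{Z} : u \le n \le v\}$. *)

theory Defs
  imports Main
begin

definition hsumset :: "nat \<Rightarrow> int set \<Rightarrow> int set" where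
  "hsumset h A = {(\<Sum>i<h. a i) | a. \<forall>i<h. a i \<in> A}"

text \<open>R_Z(h,k) = { |hA| : A subset of Z, |A| = k }.\<close>
definition sumset_sizes :: "nat \<Rightarrow> nat \<Rightarrow> nat set" where
  "sumset_sizes h k = {card (hsumset h A) | A. finite A \<and> card A = k}"

end

theory Submission
  imports Defs
begin

text \<open>Take \<open>A = {0, 1, 2, m}\<close> with \<open>m \<ge> 3\<close>. A sum of \<open>h\<close> elements of \<open>A\<close> that uses \<open>m\<close>
  exactly \<open>j\<close> times lies in \<open>j m + [0, 2(h - j)]\<close>, and all of these values occur. Writing each
  such value as \<open>q m + s\<close> with \<open>0 \<le> s < m\<close>, the values with quotient \<open>q\<close> are exactly those
  with \<open>s \<le> 2(h - q)\<close>, so \<open>|hA| = \<Sum>\<^sub>u\<^sub>\<le>\<^sub>h min(m, 2u + 1)\<close>. Taking \<open>m = 2h + 1\<close> gives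
  \<open>(h + 1)\<^sup>2\<close>, and taking \<open>m = 2k - r\<close> with \<open>k = h - i\<^sub>0\<close> gives \<open>k\<^sup>2 + (i\<^sub>0 + 1) m\<close>.\<close>

lemma hsumset_Suc:
  "hsumset (Suc h) A = {x + y | x y. x \<in> hsumset h A \<and> y \<in> A}"
proof (intro equalityI subsetI)
  fix z assume "z \<in> hsumset (Suc h) A"
  then obtain a where z: "z = (\<Sum>i<Suc h. a i)" and a: "\<forall>i<Suc h. a i \<in> A"
    unfolding hsumset_def by auto
  have "(\<Sum>i<h. a i) \<in> hsumset h A" unfolding hsumset_def using a by auto
  moreover have "z = (\<Sum>i<h. a i) + a h" using z by simp
  ultimately show "z \<in> {x + y | x y. x \<in> hsumset h A \<and> y \<in> A}" using a by blast
next
  fix z assume "z \<in> {x + y | x y. x \<in> hsumset h A \<and> y \<in> A}"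
  then obtain a y where z: "z = (\<Sum>i<h. a i) + y" and a: "\<forall>i<h. a i \<in> A" and "y \<in> A"
    unfolding hsumset_def by auto
  have "z = (\<Sum>i<Suc h. (a(h := y)) i)"
    using z by (simp add: sum.cong[of "{..<h}" _ "a(h := y)" a])
  moreover have "\<forall>i<Suc h. (a(h := y)) i \<in> A"
    using a \<open>y \<in> A\<close> by (auto simp: less_Suc_eq)
  ultimately show "z \<in> hsumset (Suc h) A"
    unfolding hsumset_def by blast
qed

definition layered_sums :: "nat \<Rightarrow> nat \<Rightarrow> nat set" where
  "layered_sums m h = {j * m + t | j t. j \<le> h \<and> t \<le> 2 * (h - j)}"

lemma layered_sums_0 [simp]: "layered_sums m 0 = {0}"
  unfolding layered_sums_def by auto

lemma layered_sums_Suc: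
  "layered_sums m (Suc h) = {x + y | x y. x \<in> layered_sums m h \<and> y \<in> {0, 1, 2, m}}"
proof (intro equalityI subsetI)
  fix z assume "z \<in> layered_sums m (Suc h)"
  then obtain j t where z: "z = j * m + t" and j: "j \<le> Suc h" and t: "t \<le> 2 * (Suc h - j)"
    unfolding layered_sums_def by auto
  show "z \<in> {x + y | x y. x \<in> layered_sums m h \<and> y \<in> {0, 1, 2, m}}"
  proof (cases "j = Suc h")
    case True
    then have "z = (h * m + 0) + m" using z t by simp
    moreover have "h * m + 0 \<in> layered_sums m h" unfolding layered_sums_def by blast
    ultimately show ?thesis by blast
  next
    case False
    \<comment> \<open>split off a summand \<open>y \<le> 2\<close> so that the rest of \<open>t\<close> fits into \<open>[0, 2(h - j)]\<close>\<close>
    define y where "y = t - 2 * (h - j)"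
    have "y \<le> 2" "j \<le> h" "t - y \<le> 2 * (h - j)" using j t False by (auto simp: y_def)
    then have "j * m + (t - y) \<in> layered_sums m h" and "y \<in> {0, 1, 2, m}"
      unfolding layered_sums_def by auto
    moreover have "z = j * m + (t - y) + y" using z by (simp add: y_def)
    ultimately show ?thesis by blast
  qed
next
  fix z assume "z \<in> {x + y | x y. x \<in> layered_sums m h \<and> y \<in> {0, 1, 2, m}}"
  then obtain j t y where z: "z = j * m + t + y" and jt: "j \<le> h" "t \<le> 2 * (h - j)"
    and y: "y \<in> {0, 1, 2, m}"
    unfolding layered_sums_def by auto
  show "z \<in> layered_sums m (Suc h)"
  proof (cases "y = m")
    case True
    then have "z = Suc j * m + t" using z by simp
    then show ?thesis using jt unfolding layered_sums_def by force
  next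
    case False
    then have "z = j * m + (t + y)" and "t + y \<le> 2 * (Suc h - j)" using z jt y by auto
    then show ?thesis using jt unfolding layered_sums_def by force
  qed
qed

lemma hsumset_0_1_2_m: "hsumset h {0, 1, 2, int m} = int ` layered_sums m h"
proof (induction h)
  case 0
  show ?case by (simp add: hsumset_def)
next
  case (Suc h)
  have "{x + y | x y. x \<in> int ` S \<and> y \<in> int ` B} = int ` {x + y | x y. x \<in> S \<and> y \<in> B}"
    for S B by force
  from this[of "layered_sums m h" "{0, 1, 2, m}"] show ?case
    using Suc by (simp add: hsumset_Suc layered_sums_Suc)
qed

lemma layered_sums_eq_image_quotient_remainder:
  assumes "m \<ge> 2"
  shows "layered_sums m h
    = (\<lambda>(q, s). q * m + s) ` (SIGMA q:{..h}. {..<min m (2 * (h - q) + 1)})"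
proof (intro equalityI subsetI)
  fix z assume "z \<in> layered_sums m h"
  then obtain j t where z: "z = j * m + t" and jt: "j \<le> h" "t \<le> 2 * (h - j)"
    unfolding layered_sums_def by auto
  define q where "q = j + t div m"
  define s where "s = t mod m"
  \<comment> \<open>moving a multiple of \<open>m \<ge> 2\<close> from \<open>t\<close> to the quotient frees at least as much room as it uses\<close>
  have "t div m * 2 \<le> t div m * m" using assms by simp
  moreover have "t = t div m * m + s" by (simp add: s_def)
  ultimately have "2 * (t div m) + s \<le> 2 * (h - j)" using jt by linarith
  then have "q \<le> h" "s < min m (2 * (h - q) + 1)"
    using assms jt by (auto simp: q_def s_def)
  moreover have "z = q * m + s" using z by (simp add: q_def s_def algebra_simps)
  ultimately show "z \<in> (\<lambda>(q, s). q * m + s) ` (SIGMA q:{..h}. {..<min m (2 * (h - q) + 1)})"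
    by force
qed (force simp: layered_sums_def)

lemma inj_on_quotient_remainder:
  fixes f :: "nat \<Rightarrow> nat"
  shows "inj_on (\<lambda>(q, s). q * m + s) (SIGMA q:Q. {..<min m (f q)})"
proof (rule inj_onI, clarify)
  fix q s q' s' :: nat
  assume "s < min m (f q)" "s' < min m (f q')" and eq: "q * m + s = q' * m + s'"
  then have "s < m" "s' < m" by auto
  then have "(q * m + s) div m = q" "(q' * m + s') div m = q'"
    "(q * m + s) mod m = s" "(q' * m + s') mod m = s'" by simp_all
  then show "q = q' \<and> s = s'" using eq by metis
qed

lemma card_layered_sums:
  assumes "m \<ge> 2"
  shows "card (layered_sums m h) = (\<Sum>u\<le>h. min m (2 * u + 1))"
proof -
  have "card (layered_sums m h) = card (SIGMA q:{..h}. {..<min m (2 * (h - q) + 1)})"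
    unfolding layered_sums_eq_image_quotient_remainder[OF assms]
    by (rule card_image[OF inj_on_quotient_remainder])
  also have "\<dots> = (\<Sum>q\<le>h. min m (2 * (h - q) + 1))"
    by simp
  also have "\<dots> = (\<Sum>u\<le>h. min m (2 * u + 1))"
    using sum.atLeastAtMost_rev[of "\<lambda>u. min m (2 * u + 1)" 0 h] by (simp add: atMost_atLeast0)
  finally show ?thesis .
qed

lemma sum_lessThan_odd: "(\<Sum>u<n. 2 * u + 1) = (n :: nat)\<^sup>2"
  by (induction n) (auto simp: power2_eq_square)

lemma sum_atMost_min_odd:
  assumes "k \<le> Suc h" "2 * k \<le> m + 1" "m \<le> 2 * k + 1"
  shows "(\<Sum>u\<le>h. min m (2 * u + 1)) = k\<^sup>2 + (Suc h - k) * m"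
proof -
  have "{..h} = {..<k} \<union> {k..<Suc h}" using assms(1) by auto
  then have "(\<Sum>u\<le>h. min m (2 * u + 1))
      = (\<Sum>u<k. min m (2 * u + 1)) + (\<Sum>u=k..<Suc h. min m (2 * u + 1))"
    by (metis ivl_disj_int_one(2) finite_atLeastLessThan finite_lessThan sum.union_disjoint)
  also have "(\<Sum>u<k. min m (2 * u + 1)) = (\<Sum>u<k. 2 * u + 1)"
    using assms(2) by (intro sum.cong) auto
  also have "(\<Sum>u=k..<Suc h. min m (2 * u + 1)) = (\<Sum>u=k..<Suc h. m)"
    using assms(3) by (intro sum.cong) auto
  finally show ?thesis using sum_lessThan_odd[of k] by simp
qed

lemma sum_atMost_min_odd_mem_sumset_sizes:
  assumes "m \<ge> 3"
  shows "(\<Sum>u\<le>h. min m (2 * u + 1)) \<in> sumset_sizes h 4"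
proof -
  have "card {0, 1, 2, int m} = 4" using assms by auto
  moreover have "card (hsumset h {0, 1, 2, int m}) = (\<Sum>u\<le>h. min m (2 * u + 1))"
    using assms by (simp add: hsumset_0_1_2_m card_image card_layered_sums)
  ultimately show ?thesis unfolding sumset_sizes_def by force
qed

theorem mainTheorem8:
  fixes h :: nat
  assumes "h \<ge> 2"
  shows "(h + 1)^2 \<in> sumset_sizes h 4 \<and>
    (\<forall>i0 r. i0 \<le> h - 2 \<and> r \<le> 1 \<longrightarrow>
       (i0 + 1) * (2 * (h - i0) - r) + (h - i0)^2 \<in> sumset_sizes h 4)"
proof (intro conjI allI impI)
  show "(h + 1)^2 \<in> sumset_sizes h 4"
    using sum_atMost_min_odd_mem_sumset_sizes[of "2 * h + 1" h]
      sum_atMost_min_odd[of "Suc h" h "2 * h + 1"] assms by simp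
next
  fix i0 r :: nat
  assume "i0 \<le> h - 2 \<and> r \<le> 1"
  then have "h - i0 \<ge> 2" "Suc h - (h - i0) = i0 + 1" "r \<le> 1" using assms by auto
  then show "(i0 + 1) * (2 * (h - i0) - r) + (h - i0)^2 \<in> sumset_sizes h 4"
    using sum_atMost_min_odd_mem_sumset_sizes[of "2 * (h - i0) - r" h]
      sum_atMost_min_odd[of "h - i0" h "2 * (h - i0) - r"]
    by (simp add: add.commute)
qed

end
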